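(* Let $M_I$ and $N_J$ be factor systems and assume Condition (D). For all $\zeta,\zeta'\in\mathrm{elem}([M_I\to N_J])$: if $\zeta(\alpha)=\zeta'(\alpha)$ for all $\alpha\in\mathrm{elem}(M_I)$, then $\zeta=\zeta'$.
   Context: For every non-empty directed preordered set $I$ a family $\mathcal F(I)$ of subsets of $I$ is fixed such that every member is cofinal, $\mathcal F(I)$ is closed under supersets and finite intersections, and it contains every non-empty upward closed subset. Condition (D): for all such $I,J$, if $H\in\mathcal F(I\times J)$ (product order) and $I'\in\mathcal F(I)$, then $H[I']:=\{j\in J\mid\exists i\in I',\ (i,j)\in H\}\in\mathcal F(J)$. A system $(M_I,\triangleright)$: pairwise disjoint sets $M_i$ with relations $\triangleright\subseteq M_{i'}\times M_i$ ($i\le i'$), reflexive for $i=i'$; $a_i\approx b_j$ iff some $c\in M_{i'}$, $i'\ge i,j$, has $c\triangleright a_i$, $c\triangleright b_j$; prefactor system: $a_{i'}\approx a_i\iff a_{i'}\triangleright a_i$. A factor system is a prefactor system with $\approx$-preserving maps $emb_{i,i'}:M_i\to M_{i'}$, $proj_{i',i}:M_{i'}\to M_i$ ($i\le i'$) such that $emb_{i,i}(a)\approx a$, $proj_{i,i}(a)\approx a$, $emb_{i',i''}(emb_{i,i'}(a))\approx emb_{i,i''}(a)$, $proj_{i',i}(proj_{i'',i'}(a))\approx proj_{i'',i}(a)$, $proj_{i',i}(emb_{i,i'}(a))\approx a$, and for $i\le i'\le i''$: $a_{i'}\triangleright a_i\Rightarrow emb_{i',i''}(a_{i'})\triangleright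 a_i$ and $a_{i''}\triangleright a_i\Rightarrow proj_{i'',i'}(a_{i''})\triangleright a_i$. The function space $[M_I\to N_J]$ is indexed by $I\times J$ (indices written $i\to j$), with states $[M_i\to N_j]$ = all $\approx$-preserving functions $M_i\to N_j$, and $f'\triangleright f$ (for $i\to j\le i'\to j'$) iff $a_{i'}\triangleright a_i$ implies $f'(a_{i'})\triangleright f(a_i)$; embeddings $f\mapsto emb_{j,j'}\circ f\circ proj_{i',i}$, projections $f'\mapsto proj_{j',j}\circ f'\circ emb_{i,i'}$. A consistent set in a system is $\alpha\subseteq\bigcup_iM_i$ such that $a_{i'}\triangleright a_i$ for all $a_{i'},a_i\in\alpha$ with $i'\ge i$, and $\{i\mid\alpha\cap M_i\ne\emptyset\}\in\mathcal F(I)$; $\mathrm{elem}(M_I)$ is the set of inclusion-maximal consistent sets. For a consistent set $\zeta$ of $[M_I\to N_J]$ and a consistent set $\alpha$ of $M_I$, $\zeta(\alpha):=\{f(a_i)\mid f\in\zeta\cap[M_i\to N_j]\text{ for some }j,\ a_i\in\alpha\cap M_i\}$. *)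

theory Defs
  imports Main "HOL-Library.FuncSet"
begin

definition directed_preorder :: "'i set \<Rightarrow> ('i \<Rightarrow> 'i \<Rightarrow> bool) \<Rightarrow> bool" where
  "directed_preorder I le \<longleftrightarrow> I \<noteq> {} \<and> (\<forall>i\<in>I. le i i)
     \<and> (\<forall>i\<in>I. \<forall>j\<in>I. \<forall>k\<in>I. le i j \<longrightarrow> le j k \<longrightarrow> le i k)
     \<and> (\<forall>i\<in>I. \<forall>j\<in>I. \<exists>k\<in>I. le i k \<and> le j k)"

definition cofinal :: "'i set \<Rightarrow> ('i \<Rightarrow> 'i \<Rightarrow> bool) \<Rightarrow> 'i set \<Rightarrow> bool" where
  "cofinal I le A \<longleftrightarrow> A \<subseteq> I \<and> (\<forall>i\<in>I. \<exists>k\<in>A. le i k)"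

definition upward_closed :: "'i set \<Rightarrow> ('i \<Rightarrow> 'i \<Rightarrow> bool) \<Rightarrow> 'i set \<Rightarrow> bool" where
  "upward_closed I le A \<longleftrightarrow> A \<subseteq> I \<and> (\<forall>i\<in>A. \<forall>k\<in>I. le i k \<longrightarrow> k \<in> A)"

definition admissible_family :: "'i set \<Rightarrow> ('i \<Rightarrow> 'i \<Rightarrow> bool) \<Rightarrow> 'i set set \<Rightarrow> bool" where
  "admissible_family I le F \<longleftrightarrow>
     (\<forall>A\<in>F. cofinal I le A)
     \<and> (\<forall>A\<in>F. \<forall>B. A \<subseteq> B \<and> B \<subseteq> I \<longrightarrow> B \<in> F)
     \<and> (\<forall>A\<in>F. \<forall>B\<in>F. A \<inter> B \<in> F)
     \<and> (\<forall>A. upward_closed I le A \<and> A \<noteq> {} \<longrightarrow> A \<in> F)"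

definition prod_le :: "('i \<Rightarrow> 'i \<Rightarrow> bool) \<Rightarrow> ('j \<Rightarrow> 'j \<Rightarrow> bool) \<Rightarrow> 'i \<times> 'j \<Rightarrow> 'i \<times> 'j \<Rightarrow> bool" where
  "prod_le leI leJ p q \<longleftrightarrow> leI (fst p) (fst q) \<and> leJ (snd p) (snd q)"

definition condD :: "'i set \<Rightarrow> 'j set \<Rightarrow> 'i set set \<Rightarrow> 'j set set \<Rightarrow> ('i \<times> 'j) set set \<Rightarrow> bool" where
  "condD I J FI FJ FIJ \<longleftrightarrow>
     (\<forall>H\<in>FIJ. \<forall>I'\<in>FI. {j\<in>J. \<exists>i\<in>I'. (i, j) \<in> H} \<in> FJ)"

definition is_system :: "'i set \<Rightarrow> ('i \<Rightarrow> 'i \<Rightarrow> bool) \<Rightarrow> ('i \<Rightarrow> 'a set) \<Rightarrow> ('a \<Rightarrow> 'a \<Rightarrow> bool) \<Rightarrow> bool" where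
  "is_system I le M tr \<longleftrightarrow>
     (\<forall>i\<in>I. \<forall>i'\<in>I. i \<noteq> i' \<longrightarrow> M i \<inter> M i' = {})
     \<and> (\<forall>a b. tr a b \<longrightarrow> (\<exists>i\<in>I. \<exists>i'\<in>I. le i i' \<and> a \<in> M i' \<and> b \<in> M i))
     \<and> (\<forall>i\<in>I. \<forall>a\<in>M i. tr a a)"

definition sys_approx :: "'i set \<Rightarrow> ('i \<Rightarrow> 'i \<Rightarrow> bool) \<Rightarrow> ('i \<Rightarrow> 'a set) \<Rightarrow> ('a \<Rightarrow> 'a \<Rightarrow> bool) \<Rightarrow> 'a \<Rightarrow> 'a \<Rightarrow> bool" where
  "sys_approx I le M tr a b \<longleftrightarrow>
     (\<exists>i\<in>I. \<exists>j\<in>I. \<exists>i'\<in>I. \<exists>c\<in>M i'. a \<in> M i \<and> b \<in> M j \<and> le i i' \<and> le j i' \<and> tr c a \<and> tr c b)"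

definition prefactor_system :: "'i set \<Rightarrow> ('i \<Rightarrow> 'i \<Rightarrow> bool) \<Rightarrow> ('i \<Rightarrow> 'a set) \<Rightarrow> ('a \<Rightarrow> 'a \<Rightarrow> bool) \<Rightarrow> bool" where
  "prefactor_system I le M tr \<longleftrightarrow> is_system I le M tr
     \<and> (\<forall>i\<in>I. \<forall>i'\<in>I. le i i' \<longrightarrow> (\<forall>a'\<in>M i'. \<forall>a\<in>M i. sys_approx I le M tr a' a \<longleftrightarrow> tr a' a))"

definition approx_preserving :: "'a set \<Rightarrow> ('a \<Rightarrow> 'a \<Rightarrow> bool) \<Rightarrow> ('b \<Rightarrow> 'b \<Rightarrow> bool) \<Rightarrow> ('a \<Rightarrow> 'b) \<Rightarrow> bool" where
  "approx_preserving A apA apB f \<longleftrightarrow> (\<forall>a\<in>A. \<forall>b\<in>A. apA a b \<longrightarrow> apB (f a) (f b))"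

definition factor_system :: "'i set \<Rightarrow> ('i \<Rightarrow> 'i \<Rightarrow> bool) \<Rightarrow> ('i \<Rightarrow> 'a set) \<Rightarrow> ('a \<Rightarrow> 'a \<Rightarrow> bool)
    \<Rightarrow> ('i \<Rightarrow> 'i \<Rightarrow> 'a \<Rightarrow> 'a) \<Rightarrow> ('i \<Rightarrow> 'i \<Rightarrow> 'a \<Rightarrow> 'a) \<Rightarrow> bool" where
  "factor_system I le M tr emb proj \<longleftrightarrow> prefactor_system I le M tr \<and>
     (let ap = sys_approx I le M tr in
       (\<forall>i\<in>I. \<forall>i'\<in>I. le i i' \<longrightarrow>
          emb i i' \<in> M i \<rightarrow> M i' \<and> proj i' i \<in> M i' \<rightarrow> M i
          \<and> approx_preserving (M i) ap ap (emb i i') \<and> approx_preserving (M i') ap ap (proj i' i))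
     \<and> (\<forall>i\<in>I. \<forall>a\<in>M i. ap (emb i i a) a \<and> ap (proj i i a) a)
     \<and> (\<forall>i\<in>I. \<forall>i'\<in>I. \<forall>i''\<in>I. le i i' \<longrightarrow> le i' i'' \<longrightarrow>
          (\<forall>a\<in>M i. ap (emb i' i'' (emb i i' a)) (emb i i'' a))
          \<and> (\<forall>a\<in>M i''. ap (proj i' i (proj i'' i' a)) (proj i'' i a)))
     \<and> (\<forall>i\<in>I. \<forall>i'\<in>I. le i i' \<longrightarrow> (\<forall>a\<in>M i. ap (proj i' i (emb i i' a)) a))
     \<and> (\<forall>i\<in>I. \<forall>i'\<in>I. \<forall>i''\<in>I. le i i' \<longrightarrow> le i' i'' \<longrightarrow>
          (\<forall>a'\<in>M i'. \<forall>a\<in>M i. tr a' a \<longrightarrow> tr (emb i' i'' a') a)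
          \<and> (\<forall>a''\<in>M i''. \<forall>a\<in>M i. tr a'' a \<longrightarrow> tr (proj i'' i' a'') a)))"

text \<open>A state of [M_i \<rightarrow> N_j] is tagged with its index (i, j); the function itself is
  an extensional (undefined outside M_i) approx-preserving map M_i \<rightarrow> N_j.\<close>
definition fs_states :: "'i set \<Rightarrow> ('i \<Rightarrow> 'i \<Rightarrow> bool) \<Rightarrow> ('i \<Rightarrow> 'a set) \<Rightarrow> ('a \<Rightarrow> 'a \<Rightarrow> bool)
    \<Rightarrow> 'j set \<Rightarrow> ('j \<Rightarrow> 'j \<Rightarrow> bool) \<Rightarrow> ('j \<Rightarrow> 'b set) \<Rightarrow> ('b \<Rightarrow> 'b \<Rightarrow> bool)
    \<Rightarrow> 'i \<times> 'j \<Rightarrow> (('i \<times> 'j) \<times> ('a \<Rightarrow> 'b)) set" where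
  "fs_states I leI M trM J leJ N trN p =
     {(p, f) | f. f \<in> M (fst p) \<rightarrow>\<^sub>E N (snd p)
        \<and> approx_preserving (M (fst p)) (sys_approx I leI M trM) (sys_approx J leJ N trN) f}"

definition fs_tr :: "'i set \<Rightarrow> ('i \<Rightarrow> 'i \<Rightarrow> bool) \<Rightarrow> ('i \<Rightarrow> 'a set) \<Rightarrow> ('a \<Rightarrow> 'a \<Rightarrow> bool)
    \<Rightarrow> 'j set \<Rightarrow> ('j \<Rightarrow> 'j \<Rightarrow> bool) \<Rightarrow> ('j \<Rightarrow> 'b set) \<Rightarrow> ('b \<Rightarrow> 'b \<Rightarrow> bool)
    \<Rightarrow> ('i \<times> 'j) \<times> ('a \<Rightarrow> 'b) \<Rightarrow> ('i \<times> 'j) \<times> ('a \<Rightarrow> 'b) \<Rightarrow> bool" where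
  "fs_tr I leI M trM J leJ N trN g' g \<longleftrightarrow>
     fst g \<in> I \<times> J \<and> fst g' \<in> I \<times> J \<and> prod_le leI leJ (fst g) (fst g')
     \<and> g \<in> fs_states I leI M trM J leJ N trN (fst g)
     \<and> g' \<in> fs_states I leI M trM J leJ N trN (fst g')
     \<and> (\<forall>a'\<in>M (fst (fst g')). \<forall>a\<in>M (fst (fst g)). trM a' a \<longrightarrow> trN (snd g' a') (snd g a))"

definition consistent :: "'i set \<Rightarrow> ('i \<Rightarrow> 'i \<Rightarrow> bool) \<Rightarrow> ('i \<Rightarrow> 'a set) \<Rightarrow> ('a \<Rightarrow> 'a \<Rightarrow> bool)
    \<Rightarrow> 'i set set \<Rightarrow> 'a set \<Rightarrow> bool" where
  "consistent I le M tr F \<alpha> \<longleftrightarrow> \<alpha> \<subseteq> (\<Union>i\<in>I. M i)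
     \<and> (\<forall>a\<in>\<alpha>. \<forall>b\<in>\<alpha>. \<forall>i\<in>I. \<forall>i'\<in>I. le i i' \<and> a \<in> M i' \<and> b \<in> M i \<longrightarrow> tr a b)
     \<and> {i\<in>I. \<alpha> \<inter> M i \<noteq> {}} \<in> F"

definition elem :: "'i set \<Rightarrow> ('i \<Rightarrow> 'i \<Rightarrow> bool) \<Rightarrow> ('i \<Rightarrow> 'a set) \<Rightarrow> ('a \<Rightarrow> 'a \<Rightarrow> bool)
    \<Rightarrow> 'i set set \<Rightarrow> 'a set set" where
  "elem I le M tr F = {\<alpha>. consistent I le M tr F \<alpha>
     \<and> (\<forall>\<beta>. consistent I le M tr F \<beta> \<and> \<alpha> \<subseteq> \<beta> \<longrightarrow> \<beta> = \<alpha>)}"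

definition fs_apply :: "('i \<Rightarrow> 'a set) \<Rightarrow> (('i \<times> 'j) \<times> ('a \<Rightarrow> 'b)) set \<Rightarrow> 'a set \<Rightarrow> 'b set" where
  "fs_apply M \<zeta> \<alpha> = {f a | p f a. (p, f) \<in> \<zeta> \<and> a \<in> \<alpha> \<and> a \<in> M (fst p)}"

end

theory Submission
  imports Defs
begin

text \<open>It suffices to show that \<zeta> \<union> \<zeta>' is consistent: maximality then gives
  \<zeta> = \<zeta> \<union> \<zeta>' = \<zeta>'. The only nontrivial pairs are f \<in> \<zeta> at i \<rightarrow> j and g \<in> \<zeta>' at a
  higher index i' \<rightarrow> j', where a' \<triangleright> a must give g(a') \<triangleright> f(a). The embeddings of a' into
  all levels above i', together with a and a', form a consistent set, which Zorn's lemma extends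
  to some \<alpha> \<in> elem(M_I). Then g(a') \<in> \<zeta>'(\<alpha>) = \<zeta>(\<alpha>), say g(a') = h(b) with b \<in> \<alpha>.
  Projecting a high enough state of \<alpha> yields d with d \<triangleright> a and d \<triangleright> b, and a state h' of \<zeta>
  above both f and h gives h'(d) \<triangleright> h(b) and h'(d) \<triangleright> f(a). Hence g(a') \<approx> f(a), which in a
  prefactor system means g(a') \<triangleright> f(a).\<close>

lemma directed_preorder_refl: "directed_preorder I le \<Longrightarrow> i \<in> I \<Longrightarrow> le i i"
  unfolding directed_preorder_def by blast

lemma directed_preorder_trans:
  "directed_preorder I le \<Longrightarrow> i \<in> I \<Longrightarrow> j \<in> I \<Longrightarrow> k \<in> I \<Longrightarrow> le i j \<Longrightarrow> le j k \<Longrightarrow> le i k"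
  unfolding directed_preorder_def by blast

lemma directed_preorder_upper_bound:
  assumes "directed_preorder I le" "i \<in> I" "j \<in> I"
  obtains k where "k \<in> I" "le i k" "le j k"
  using assms unfolding directed_preorder_def by blast

lemma admissible_family_cofinal:
  assumes "admissible_family I le F" "A \<in> F" "i \<in> I"
  shows "\<exists>k\<in>A. le i k"
proof -
  have "cofinal I le A" using assms(1,2) unfolding admissible_family_def by simp
  then show ?thesis using assms(3) unfolding cofinal_def by blast
qed

lemma admissible_family_superset:
  "admissible_family I le F \<Longrightarrow> A \<in> F \<Longrightarrow> A \<subseteq> B \<Longrightarrow> B \<subseteq> I \<Longrightarrow> B \<in> F"
  unfolding admissible_family_def by blast

lemma admissible_family_principal_filter:
  assumes "admissible_family I le F" "directed_preorder I le" "i \<in> I"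
  shows "{k \<in> I. le i k} \<in> F"
proof -
  have "upward_closed I le {k \<in> I. le i k}"
    using directed_preorder_trans[OF assms(2) assms(3)] unfolding upward_closed_def by blast
  moreover have "i \<in> {k \<in> I. le i k}"
    using directed_preorder_refl[OF assms(2,3)] assms(3) by simp
  ultimately show ?thesis
    using assms(1) unfolding admissible_family_def by auto
qed

lemma prefactor_system_refl: "prefactor_system I le M tr \<Longrightarrow> i \<in> I \<Longrightarrow> a \<in> M i \<Longrightarrow> tr a a"
  unfolding prefactor_system_def is_system_def by blast

lemma prefactor_system_disjoint:
  "prefactor_system I le M tr \<Longrightarrow> i \<in> I \<Longrightarrow> j \<in> I \<Longrightarrow> a \<in> M i \<Longrightarrow> a \<in> M j \<Longrightarrow> i = j"
  unfolding prefactor_system_def is_system_def by blast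

lemma prefactor_system_tr_if_approx:
  "prefactor_system I le M tr \<Longrightarrow> i \<in> I \<Longrightarrow> i' \<in> I \<Longrightarrow> le i i' \<Longrightarrow> a' \<in> M i' \<Longrightarrow> a \<in> M i
    \<Longrightarrow> sys_approx I le M tr a' a \<Longrightarrow> tr a' a"
  unfolding prefactor_system_def by blast

lemma prefactor_system_tr_if_common_upper:
  assumes "prefactor_system I le M tr" "i \<in> I" "i' \<in> I" "m \<in> I"
    and "le i i'" "le i' m" "le i m"
    and "a' \<in> M i'" "a \<in> M i" "c \<in> M m" "tr c a'" "tr c a"
  shows "tr a' a"
proof -
  have "sys_approx I le M tr a' a"
    using assms(2-4,6-) unfolding sys_approx_def by blast
  then show ?thesis
    by (rule prefactor_system_tr_if_approx[OF assms(1-3,5,8,9)])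
qed

lemma factor_system_prefactor: "factor_system I le M tr emb proj \<Longrightarrow> prefactor_system I le M tr"
  unfolding factor_system_def by simp

lemma factor_system_funcsets:
  "factor_system I le M tr emb proj \<Longrightarrow> i \<in> I \<Longrightarrow> i' \<in> I \<Longrightarrow> le i i'
    \<Longrightarrow> emb i i' \<in> M i \<rightarrow> M i' \<and> proj i' i \<in> M i' \<rightarrow> M i"
  unfolding factor_system_def Let_def by meson

lemma factor_system_emb_in:
  assumes "factor_system I le M tr emb proj" "i \<in> I" "i' \<in> I" "le i i'" "a \<in> M i"
  shows "emb i i' a \<in> M i'"
  using factor_system_funcsets[OF assms(1-4)] assms(5) by blast

lemma factor_system_proj_in:
  assumes "factor_system I le M tr emb proj" "i \<in> I" "i' \<in> I" "le i i'" "a \<in> M i'"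
  shows "proj i' i a \<in> M i"
  using factor_system_funcsets[OF assms(1-4)] assms(5) by blast

lemma factor_system_emb_emb_approx:
  "factor_system I le M tr emb proj \<Longrightarrow> i \<in> I \<Longrightarrow> i' \<in> I \<Longrightarrow> i'' \<in> I \<Longrightarrow> le i i' \<Longrightarrow> le i' i''
    \<Longrightarrow> a \<in> M i \<Longrightarrow> sys_approx I le M tr (emb i' i'' (emb i i' a)) (emb i i'' a)"
  unfolding factor_system_def Let_def by blast

lemma factor_system_emb_tr:
  "factor_system I le M tr emb proj \<Longrightarrow> i \<in> I \<Longrightarrow> i' \<in> I \<Longrightarrow> i'' \<in> I \<Longrightarrow> le i i' \<Longrightarrow> le i' i''
    \<Longrightarrow> a' \<in> M i' \<Longrightarrow> a \<in> M i \<Longrightarrow> tr a' a \<Longrightarrow> tr (emb i' i'' a') a"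
  unfolding factor_system_def Let_def by blast

lemma factor_system_proj_tr:
  "factor_system I le M tr emb proj \<Longrightarrow> i \<in> I \<Longrightarrow> i' \<in> I \<Longrightarrow> i'' \<in> I \<Longrightarrow> le i i' \<Longrightarrow> le i' i''
    \<Longrightarrow> a'' \<in> M i'' \<Longrightarrow> a \<in> M i \<Longrightarrow> tr a'' a \<Longrightarrow> tr (proj i'' i' a'') a"
  unfolding factor_system_def Let_def by blast

lemma factor_system_emb_tr_emb:
  assumes fac: "factor_system I le M tr emb proj" and dir: "directed_preorder I le"
    and "i \<in> I" "k \<in> I" "m \<in> I" "le i k" "le k m" "a \<in> M i"
  shows "tr (emb i m a) (emb i k a)"
proof -
  have pf: "prefactor_system I le M tr" using fac by (rule factor_system_prefactor)
  have im: "le i m" using directed_preorder_trans[OF dir] assms(3-7) .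
  have ak: "emb i k a \<in> M k" and am: "emb i m a \<in> M m" and ckm: "emb k m (emb i k a) \<in> M m"
    using factor_system_emb_in[OF fac] assms(3-8) im by blast+
  have "tr (emb k m (emb i k a)) (emb i k a)"
    using factor_system_emb_tr[OF fac] prefactor_system_refl[OF pf] directed_preorder_refl[OF dir]
      assms(4,5,7) ak by blast
  moreover have "tr (emb k m (emb i k a)) (emb i m a)"
    using prefactor_system_tr_if_approx[OF pf assms(5,5) directed_preorder_refl[OF dir assms(5)] ckm am]
      factor_system_emb_emb_approx[OF fac assms(3-8)] .
  ultimately show ?thesis
    using prefactor_system_tr_if_common_upper[OF pf assms(4,5,5) assms(7)
        directed_preorder_refl[OF dir assms(5)] assms(7) am ak ckm] by blast
qed

lemma consistent_states: "consistent I le M tr F \<alpha> \<Longrightarrow> x \<in> \<alpha> \<Longrightarrow> \<exists>i\<in>I. x \<in> M i"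
  unfolding consistent_def by blast

lemma consistent_tr:
  "consistent I le M tr F \<alpha> \<Longrightarrow> a' \<in> \<alpha> \<Longrightarrow> a \<in> \<alpha> \<Longrightarrow> i \<in> I \<Longrightarrow> i' \<in> I \<Longrightarrow> le i i'
    \<Longrightarrow> a' \<in> M i' \<Longrightarrow> a \<in> M i \<Longrightarrow> tr a' a"
  unfolding consistent_def by blast

lemma consistent_levels: "consistent I le M tr F \<alpha> \<Longrightarrow> {i \<in> I. \<alpha> \<inter> M i \<noteq> {}} \<in> F"
  unfolding consistent_def by blast

lemma consistent_cofinal:
  assumes "admissible_family I le F" "consistent I le M tr F \<alpha>" "i \<in> I"
  obtains k c where "k \<in> I" "le i k" "c \<in> \<alpha>" "c \<in> M k"
  using admissible_family_cofinal[OF assms(1) consistent_levels[OF assms(2)] assms(3)] by blast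

lemma consistent_Un:
  assumes F: "admissible_family I le F"
    and "consistent I le M tr F \<alpha>" "consistent I le M tr F \<beta>"
    and "\<And>a' a i i'. a' \<in> \<alpha> \<union> \<beta> \<Longrightarrow> a \<in> \<alpha> \<union> \<beta> \<Longrightarrow> i \<in> I \<Longrightarrow> i' \<in> I \<Longrightarrow> le i i'
      \<Longrightarrow> a' \<in> M i' \<Longrightarrow> a \<in> M i \<Longrightarrow> tr a' a"
  shows "consistent I le M tr F (\<alpha> \<union> \<beta>)"
  unfolding consistent_def
proof (intro conjI)
  show "\<alpha> \<union> \<beta> \<subseteq> (\<Union>i\<in>I. M i)"
    using assms(2,3) unfolding consistent_def by blast
  show "{i \<in> I. (\<alpha> \<union> \<beta>) \<inter> M i \<noteq> {}} \<in> F"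
    by (rule admissible_family_superset[OF F consistent_levels[OF assms(2)]]) blast+
qed (use assms(4) in blast)

lemma consistent_Union_chain:
  assumes F: "admissible_family I le F" and "\<C> \<noteq> {}"
    and cons: "\<And>\<alpha>. \<alpha> \<in> \<C> \<Longrightarrow> consistent I le M tr F \<alpha>"
    and chain: "\<And>\<alpha> \<beta>. \<alpha> \<in> \<C> \<Longrightarrow> \<beta> \<in> \<C> \<Longrightarrow> \<alpha> \<subseteq> \<beta> \<or> \<beta> \<subseteq> \<alpha>"
  shows "consistent I le M tr F (\<Union>\<C>)"
  unfolding consistent_def
proof (intro conjI ballI impI allI)
  show "\<Union>\<C> \<subseteq> (\<Union>i\<in>I. M i)"
  proof
    fix x
    assume "x \<in> \<Union>\<C>"
    then obtain \<alpha> where "\<alpha> \<in> \<C>" "x \<in> \<alpha>" by blast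
    then show "x \<in> (\<Union>i\<in>I. M i)" using consistent_states[OF cons] by blast
  qed
  obtain \<alpha> where "\<alpha> \<in> \<C>" using \<open>\<C> \<noteq> {}\<close> by blast
  then have "{i \<in> I. \<alpha> \<inter> M i \<noteq> {}} \<in> F" "{i \<in> I. \<alpha> \<inter> M i \<noteq> {}} \<subseteq> {i \<in> I. \<Union>\<C> \<inter> M i \<noteq> {}}"
    using consistent_levels[OF cons] by blast+
  then show "{i \<in> I. \<Union>\<C> \<inter> M i \<noteq> {}} \<in> F"
    by (rule admissible_family_superset[OF F]) blast
next
  fix a' a i i'
  assume "a' \<in> \<Union>\<C>" "a \<in> \<Union>\<C>" "i \<in> I" "i' \<in> I" "le i i' \<and> a' \<in> M i' \<and> a \<in> M i"
  moreover from \<open>a' \<in> \<Union>\<C>\<close> \<open>a \<in> \<Union>\<C>\<close> obtain \<alpha> where "\<alpha> \<in> \<C>" "a' \<in> \<alpha>" "a \<in> \<alpha>"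
    using chain by blast
  ultimately show "tr a' a"
    using consistent_tr[OF cons] by blast
qed

lemma elem_consistent: "\<alpha> \<in> elem I le M tr F \<Longrightarrow> consistent I le M tr F \<alpha>"
  unfolding elem_def by blast

lemma elem_eq_if_consistent_Un:
  "\<alpha> \<in> elem I le M tr F \<Longrightarrow> \<beta> \<in> elem I le M tr F \<Longrightarrow> consistent I le M tr F (\<alpha> \<union> \<beta>) \<Longrightarrow> \<alpha> = \<beta>"
  unfolding elem_def by blast

lemma consistent_subset_elem:
  assumes F: "admissible_family I le F" and "consistent I le M tr F \<alpha>"
  obtains \<beta> where "\<beta> \<in> elem I le M tr F" "\<alpha> \<subseteq> \<beta>"
proof -
  let ?A = "{\<beta>. consistent I le M tr F \<beta> \<and> \<alpha> \<subseteq> \<beta>}"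
  have "\<exists>\<beta>\<in>?A. \<forall>\<gamma>\<in>?A. \<beta> \<subseteq> \<gamma> \<longrightarrow> \<gamma> = \<beta>"
  proof (rule subset_Zorn_nonempty)
    show "?A \<noteq> {}" using assms(2) by blast
    show "\<Union>\<C> \<in> ?A" if "\<C> \<noteq> {}" "subset.chain ?A \<C>" for \<C>
    proof -
      have "\<C> \<subseteq> ?A" and "\<forall>\<beta>\<in>\<C>. \<forall>\<gamma>\<in>\<C>. \<beta> \<subseteq> \<gamma> \<or> \<gamma> \<subseteq> \<beta>"
        using that(2) unfolding subset_chain_def by auto
      then have "consistent I le M tr F (\<Union>\<C>)"
        by (intro consistent_Union_chain[OF F that(1)]) auto
      moreover have "\<alpha> \<subseteq> \<Union>\<C>"
        using \<open>\<C> \<subseteq> ?A\<close> that(1) by blast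
      ultimately show ?thesis by blast
    qed
  qed
  then obtain \<beta> where \<beta>: "\<beta> \<in> ?A" "\<forall>\<gamma>\<in>?A. \<beta> \<subseteq> \<gamma> \<longrightarrow> \<gamma> = \<beta>" ..
  have "\<beta> \<in> elem I le M tr F"
    using \<beta> unfolding elem_def by blast
  then show ?thesis
    by (rule that) (use \<beta>(1) in blast)
qed

lemma factor_system_tr_pair_in_elem:
  assumes fac: "factor_system I le M tr emb proj" and dir: "directed_preorder I le"
    and F: "admissible_family I le F"
    and I: "i \<in> I" "i' \<in> I" and "le i i'" and a: "a \<in> M i" and a': "a' \<in> M i'" and "tr a' a"
  obtains \<alpha> where "\<alpha> \<in> elem I le M tr F" "a \<in> \<alpha>" "a' \<in> \<alpha>"
proof -
  have pf: "prefactor_system I le M tr" using fac by (rule factor_system_prefactor)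
  define \<alpha> where "\<alpha> = {a, a'} \<union> {emb i' k a' | k. k \<in> I \<and> le i' k}"
  have below_emb: "tr (emb i' m a') x"
    if "x \<in> \<alpha>" "p \<in> I" "x \<in> M p" "m \<in> I" "le i' m" "le p m" for x p m
  proof -
    consider "x = a" | "x = a'" | k where "k \<in> I" "le i' k" "x = emb i' k a'"
      using \<open>x \<in> \<alpha>\<close> unfolding \<alpha>_def by blast
    then show ?thesis
    proof cases
      case 1
      then show ?thesis
        using factor_system_emb_tr[OF fac I _ \<open>le i i'\<close> _ a' a \<open>tr a' a\<close>] that by blast
    next
      case 2
      then show ?thesis
        using factor_system_emb_tr[OF fac I(2,2) _ directed_preorder_refl[OF dir I(2)] _ a' a'
            prefactor_system_refl[OF pf I(2) a']] that by blast
    next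
      case 3
      then have "p = k"
        using prefactor_system_disjoint[OF pf] factor_system_emb_in[OF fac I(2)] a' that(2,3) by blast
      then show ?thesis
        using factor_system_emb_tr_emb[OF fac dir I(2) 3(1) _ 3(2) _ a'] 3(3) that by blast
    qed
  qed
  have "consistent I le M tr F \<alpha>"
    unfolding consistent_def
  proof (intro conjI ballI impI)
    show "\<alpha> \<subseteq> (\<Union>i\<in>I. M i)"
      using I a a' factor_system_emb_in[OF fac I(2)] unfolding \<alpha>_def by blast
    have "{k \<in> I. le i' k} \<subseteq> {k \<in> I. \<alpha> \<inter> M k \<noteq> {}}"
      using factor_system_emb_in[OF fac I(2) _ _ a'] unfolding \<alpha>_def by blast
    then show "{k \<in> I. \<alpha> \<inter> M k \<noteq> {}} \<in> F"
      using admissible_family_superset[OF F admissible_family_principal_filter[OF F dir I(2)]] by blast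
  next
    fix x y q q'
    assume "x \<in> \<alpha>" "y \<in> \<alpha>" "q \<in> I" "q' \<in> I" and h: "le q q' \<and> x \<in> M q' \<and> y \<in> M q"
    obtain m where m: "m \<in> I" "le q' m" "le i' m"
      using directed_preorder_upper_bound[OF dir \<open>q' \<in> I\<close> I(2)] .
    have "le q m" using directed_preorder_trans[OF dir \<open>q \<in> I\<close> \<open>q' \<in> I\<close> m(1)] h m(2) by blast
    then show "tr x y"
      using prefactor_system_tr_if_common_upper[OF pf \<open>q \<in> I\<close> \<open>q' \<in> I\<close> m(1) _ m(2)]
        below_emb \<open>x \<in> \<alpha>\<close> \<open>y \<in> \<alpha>\<close> \<open>q \<in> I\<close> \<open>q' \<in> I\<close> h m factor_system_emb_in[OF fac I(2) m(1) m(3) a']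
      by blast
  qed
  then obtain \<beta> where "\<beta> \<in> elem I le M tr F" "\<alpha> \<subseteq> \<beta>"
    using consistent_subset_elem[OF F] by blast
  then show ?thesis
    using that unfolding \<alpha>_def by blast
qed

lemma factor_system_consistent_common_tr:
  assumes fac: "factor_system I le M tr emb proj" and dir: "directed_preorder I le"
    and F: "admissible_family I le F" and cons: "consistent I le M tr F \<alpha>"
    and "a \<in> \<alpha>" "b \<in> \<alpha>" "i \<in> I" "k \<in> I" "m \<in> I" "a \<in> M i" "b \<in> M k" "le i m" "le k m"
  obtains d where "d \<in> M m" "tr d a" "tr d b"
proof -
  obtain m' c where c: "m' \<in> I" "le m m'" "c \<in> \<alpha>" "c \<in> M m'"
    using consistent_cofinal[OF F cons \<open>m \<in> I\<close>] .
  have "le i m'" "le k m'"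
    using directed_preorder_trans[OF dir] assms(7-9,12,13) c(1,2) by blast+
  then have "tr c a" "tr c b"
    using consistent_tr[OF cons] assms(5-8,10,11) c by blast+
  then show ?thesis
    using that factor_system_proj_in[OF fac \<open>m \<in> I\<close> c(1,2,4)]
      factor_system_proj_tr[OF fac _ \<open>m \<in> I\<close> c(1) _ c(2,4)] assms(7,8,10-13) by blast
qed

lemma fs_states_fst: "x \<in> fs_states I leI M trM J leJ N trN p \<Longrightarrow> fst x = p"
  unfolding fs_states_def by auto

locale factor_system_pair =
  fixes I :: "'i set" and leI :: "'i \<Rightarrow> 'i \<Rightarrow> bool" and M :: "'i \<Rightarrow> 'a set"
    and trM :: "'a \<Rightarrow> 'a \<Rightarrow> bool" and embM projM :: "'i \<Rightarrow> 'i \<Rightarrow> 'a \<Rightarrow> 'a"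
    and J :: "'j set" and leJ :: "'j \<Rightarrow> 'j \<Rightarrow> bool" and N :: "'j \<Rightarrow> 'b set"
    and trN :: "'b \<Rightarrow> 'b \<Rightarrow> bool" and embN projN :: "'j \<Rightarrow> 'j \<Rightarrow> 'b \<Rightarrow> 'b"
    and FI :: "'i set set" and FIJ :: "('i \<times> 'j) set set"
  assumes dirI: "directed_preorder I leI"
    and dirJ: "directed_preorder J leJ"
    and FI: "admissible_family I leI FI"
    and FIJ: "admissible_family (I \<times> J) (prod_le leI leJ) FIJ"
    and facM: "factor_system I leI M trM embM projM"
    and facN: "factor_system J leJ N trN embN projN"
begin

abbreviation fs_consistent :: "(('i \<times> 'j) \<times> ('a \<Rightarrow> 'b)) set \<Rightarrow> bool" where
  "fs_consistent \<equiv> consistent (I \<times> J) (prod_le leI leJ) (fs_states I leI M trM J leJ N trN)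
     (fs_tr I leI M trM J leJ N trN) FIJ"

lemma fs_consistent_state:
  assumes "fs_consistent \<zeta>" "((i, j), f) \<in> \<zeta>"
  shows "i \<in> I" "j \<in> J" "((i, j), f) \<in> fs_states I leI M trM J leJ N trN (i, j)"
proof -
  obtain p where "p \<in> I \<times> J" "((i, j), f) \<in> fs_states I leI M trM J leJ N trN p"
    using consistent_states[OF assms] by blast
  moreover from this have "p = (i, j)" using fs_states_fst by fastforce
  ultimately show "i \<in> I" "j \<in> J" "((i, j), f) \<in> fs_states I leI M trM J leJ N trN (i, j)"
    by auto
qed

lemma fs_consistent_value_in:
  assumes "fs_consistent \<zeta>" "((i, j), f) \<in> \<zeta>" "a \<in> M i"
  shows "f a \<in> N j"
  using fs_consistent_state(3)[OF assms(1,2)] assms(3) unfolding fs_states_def by auto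

lemma fs_consistent_tr:
  assumes "fs_consistent \<zeta>" "((i, j), f) \<in> \<zeta>" "((i', j'), g) \<in> \<zeta>" "leI i i'" "leJ j j'"
    and "a \<in> M i" "a' \<in> M i'" "trM a' a"
  shows "trN (g a') (f a)"
proof -
  have "fs_tr I leI M trM J leJ N trN ((i', j'), g) ((i, j), f)"
    using consistent_tr[OF assms(1,3,2), of "(i, j)" "(i', j')"] fs_consistent_state[OF assms(1,2)]
      fs_consistent_state[OF assms(1,3)] assms(4,5) unfolding prod_le_def by simp
  then show ?thesis
    using assms(6-8) unfolding fs_tr_def by simp
qed

lemma fs_consistent_cofinal:
  assumes "fs_consistent \<zeta>" "i \<in> I" "j \<in> J"
  obtains i' j' f where "((i', j'), f) \<in> \<zeta>" "leI i i'" "leJ j j'"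
proof -
  obtain i' j' x where le: "prod_le leI leJ (i, j) (i', j')"
    and x: "x \<in> \<zeta>" "x \<in> fs_states I leI M trM J leJ N trN (i', j')"
    using consistent_cofinal[OF FIJ assms(1)] assms(2,3) by (metis mem_Sigma_iff surj_pair)
  have "x = ((i', j'), snd x)"
    using fs_states_fst[OF x(2)] by (metis prod.collapse)
  then show ?thesis
    using that[of i' j' "snd x"] x(1) le unfolding prod_le_def by simp
qed

lemma fs_apply_tr:
  assumes z: "fs_consistent \<zeta>" and \<alpha>: "consistent I leI M trM FI \<alpha>"
    and f: "((i, j), f) \<in> \<zeta>" and a: "a \<in> \<alpha>" "a \<in> M i"
    and y: "y \<in> fs_apply M \<zeta> \<alpha>" "y \<in> N j'" "j' \<in> J" "leJ j j'"
  shows "trN y (f a)"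
proof -
  have pfN: "prefactor_system J leJ N trN" using facN by (rule factor_system_prefactor)
  have ij: "i \<in> I" "j \<in> J" using fs_consistent_state[OF z f] by simp_all
  obtain k l h b where h: "((k, l), h) \<in> \<zeta>" and b: "b \<in> \<alpha>" "b \<in> M k" and yhb: "y = h b"
    using y(1) unfolding fs_apply_def by auto
  have kl: "k \<in> I" "l \<in> J" using fs_consistent_state[OF z h] by simp_all
  have "l = j'"
    using prefactor_system_disjoint[OF pfN kl(2) y(3)] fs_consistent_value_in[OF z h b(2)] y(2) yhb
    by simp
  obtain k0 where k0: "k0 \<in> I" "leI k k0" "leI i k0"
    using directed_preorder_upper_bound[OF dirI kl(1) ij(1)] .
  obtain k1 l1 h' where h': "((k1, l1), h') \<in> \<zeta>" "leI k0 k1" "leJ j' l1"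
    using fs_consistent_cofinal[OF z k0(1) y(3)] .
  have kl1: "k1 \<in> I" "l1 \<in> J" using fs_consistent_state[OF z h'(1)] by simp_all
  have "leI k k1" "leI i k1" "leJ j l1"
    using directed_preorder_trans[OF dirI] directed_preorder_trans[OF dirJ] k0 h'(2,3) kl1 kl(1) ij y(3,4)
    by blast+
  moreover obtain d where d: "d \<in> M k1" "trM d a" "trM d b"
    using factor_system_consistent_common_tr[OF facM dirI FI \<alpha> a(1) b(1) ij(1) kl(1) kl1(1) a(2) b(2)]
      \<open>leI i k1\<close> \<open>leI k k1\<close> by blast
  ultimately have "trN (h' d) y" "trN (h' d) (f a)"
    using fs_consistent_tr[OF z h h'(1)] fs_consistent_tr[OF z f h'(1)] a(2) b(2) h'(3) yhb \<open>l = j'\<close>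
    by blast+
  then show ?thesis
    using prefactor_system_tr_if_common_upper[OF pfN ij(2) y(3) kl1(2) y(4) h'(3) \<open>leJ j l1\<close> y(2)]
      fs_consistent_value_in[OF z f a(2)] fs_consistent_value_in[OF z h'(1) d(1)] by blast
qed

lemma fs_apply_eq_imp_tr:
  assumes z: "fs_consistent \<zeta>" and z': "fs_consistent \<zeta>'"
    and eq: "\<And>\<alpha>. \<alpha> \<in> elem I leI M trM FI \<Longrightarrow> fs_apply M \<zeta> \<alpha> = fs_apply M \<zeta>' \<alpha>"
    and f: "((i, j), f) \<in> \<zeta>" and g: "((i', j'), g) \<in> \<zeta>'" and "leI i i'" "leJ j j'"
    and a: "a \<in> M i" and a': "a' \<in> M i'" and "trM a' a"
  shows "trN (g a') (f a)"
proof -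
  have I: "i \<in> I" "i' \<in> I" "j' \<in> J"
    using fs_consistent_state[OF z f] fs_consistent_state[OF z' g] by simp_all
  obtain \<alpha> where \<alpha>: "\<alpha> \<in> elem I leI M trM FI" "a \<in> \<alpha>" "a' \<in> \<alpha>"
    using factor_system_tr_pair_in_elem[OF facM dirI FI I(1,2) \<open>leI i i'\<close> a a' \<open>trM a' a\<close>] .
  have "g a' \<in> fs_apply M \<zeta>' \<alpha>"
    using g \<alpha>(3) a' unfolding fs_apply_def by force
  then have "g a' \<in> fs_apply M \<zeta> \<alpha>" using eq[OF \<alpha>(1)] by simp
  then show ?thesis
    using fs_apply_tr[OF z elem_consistent[OF \<alpha>(1)] f \<alpha>(2) a _ _ I(3) \<open>leJ j j'\<close>]
      fs_consistent_value_in[OF z' g a'] by blast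
qed

lemma fs_consistent_Un:
  assumes z: "fs_consistent \<zeta>" and z': "fs_consistent \<zeta>'"
    and eq: "\<And>\<alpha>. \<alpha> \<in> elem I leI M trM FI \<Longrightarrow> fs_apply M \<zeta> \<alpha> = fs_apply M \<zeta>' \<alpha>"
  shows "fs_consistent (\<zeta> \<union> \<zeta>')"
proof (rule consistent_Un[OF FIJ z z'])
  fix u v p p'
  assume uv: "u \<in> \<zeta> \<union> \<zeta>'" "v \<in> \<zeta> \<union> \<zeta>'" and p: "p \<in> I \<times> J" "p' \<in> I \<times> J"
    and le: "prod_le leI leJ p p'"
    and st: "u \<in> fs_states I leI M trM J leJ N trN p'" "v \<in> fs_states I leI M trM J leJ N trN p"
  obtain i j i' j' where ij: "p = (i, j)" "p' = (i', j')" by fastforce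
  obtain f g where fg: "v = ((i, j), f)" "u = ((i', j'), g)"
    using fs_states_fst[OF st(1)] fs_states_fst[OF st(2)] ij by (metis prod.collapse)
  have "trN (g a') (f a)" if "a \<in> M i" "a' \<in> M i'" "trM a' a" for a a'
    using uv fs_consistent_tr[OF z] fs_consistent_tr[OF z'] fs_apply_eq_imp_tr[OF z z' eq]
      fs_apply_eq_imp_tr[OF z' z eq[symmetric]] le that unfolding fg ij prod_le_def by auto
  then show "fs_tr I leI M trM J leJ N trN u v"
    using p le st unfolding fs_tr_def fg ij by auto
qed

end

theorem lemma2p13:
  fixes I :: "'i set" and leI :: "'i \<Rightarrow> 'i \<Rightarrow> bool" and M :: "'i \<Rightarrow> 'a set"
    and trM :: "'a \<Rightarrow> 'a \<Rightarrow> bool" and embM projM :: "'i \<Rightarrow> 'i \<Rightarrow> 'a \<Rightarrow> 'a"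
    and J :: "'j set" and leJ :: "'j \<Rightarrow> 'j \<Rightarrow> bool" and N :: "'j \<Rightarrow> 'b set"
    and trN :: "'b \<Rightarrow> 'b \<Rightarrow> bool" and embN projN :: "'j \<Rightarrow> 'j \<Rightarrow> 'b \<Rightarrow> 'b"
    and FI :: "'i set set" and FJ :: "'j set set" and FIJ :: "('i \<times> 'j) set set"
    and \<zeta> \<zeta>' :: "(('i \<times> 'j) \<times> ('a \<Rightarrow> 'b)) set"
  assumes dirI: "directed_preorder I leI"
    and dirJ: "directed_preorder J leJ"
    and FI: "admissible_family I leI FI"
    and FJ: "admissible_family J leJ FJ"
    and FIJ: "admissible_family (I \<times> J) (prod_le leI leJ) FIJ"
    and D: "condD I J FI FJ FIJ"
    and facM: "factor_system I leI M trM embM projM"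
    and facN: "factor_system J leJ N trN embN projN"
    and z: "\<zeta> \<in> elem (I \<times> J) (prod_le leI leJ) (fs_states I leI M trM J leJ N trN)
                  (fs_tr I leI M trM J leJ N trN) FIJ"
    and z': "\<zeta>' \<in> elem (I \<times> J) (prod_le leI leJ) (fs_states I leI M trM J leJ N trN)
                  (fs_tr I leI M trM J leJ N trN) FIJ"
    and eq: "\<forall>\<alpha>\<in>elem I leI M trM FI. fs_apply M \<zeta> \<alpha> = fs_apply M \<zeta>' \<alpha>"
  shows "\<zeta> = \<zeta>'"
proof -
  interpret factor_system_pair I leI M trM embM projM J leJ N trN embN projN FI FIJ
    using dirI dirJ FI FIJ facM facN by unfold_locales
  have "fs_consistent (\<zeta> \<union> \<zeta>')"
    using fs_consistent_Un[OF elem_consistent[OF z] elem_consistent[OF z']] eq by blast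
  then show ?thesis
    by (rule elem_eq_if_consistent_Un[OF z z'])
qed

end
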